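(* For any MeanEstimation algorithm (possibly using shared randomness) in which any machine receives at most $b$ bits, there is a valid input for which $\mathbb{E}[\|\mathbf{EST}-\boldsymbol\mu\|^2]=\Omega\!\left(y^2\,2^{-2b/d}\right)$.
   Context: MeanEstimation: there are $n$ machines; machine $v$ receives $\mathbf{x}_v\in\mathbb{R}^d$, and all receive a common $y$ with $\|\mathbf{x}_u-\mathbf{x}_v\|\le y$ for all $u,v$. All machines must output the same $\mathbf{EST}\in\mathbb{R}^d$ with $\mathbb{E}[\mathbf{EST}]=\boldsymbol\mu=\frac1n\sum_v\mathbf{x}_v$. $\|\cdot\|$ is a fixed one of the $\ell_1,\ell_2,\ell_\infty$ norms. Algorithms may use a common random string available to all machines. Bits received by a machine count all bits it receives from any source during the algorithm, and the bound $b$ holds with certainty. The hidden constant is absolute. *)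

theory Defs
  imports "HOL-Probability.Probability"
begin

text \<open>Vectors in R^d are functions nat => real whose coordinates i < d are the
  relevant ones. Machines are 0,...,n-1. The shared random string is an element
  of type nat => bool, distributed according to an arbitrary probability measure P.\<close>

datatype normkind = L1 | L2 | Linf

fun vnorm :: "normkind \<Rightarrow> nat \<Rightarrow> (nat \<Rightarrow> real) \<Rightarrow> real" where
  "vnorm L1 d v = (\<Sum>i<d. \<bar>v i\<bar>)"
| "vnorm L2 d v = sqrt (\<Sum>i<d. (v i)\<^sup>2)"
| "vnorm Linf d v = Max (insert 0 ((\<lambda>i. \<bar>v i\<bar>) ` {..<d}))"

definition valid_input :: "normkind \<Rightarrow> nat \<Rightarrow> nat \<Rightarrow> (nat \<Rightarrow> nat \<Rightarrow> real) \<Rightarrow> real \<Rightarrow> bool" where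
  "valid_input nk n d x y \<longleftrightarrow>
     (\<forall>v<n. \<forall>i. d \<le> i \<longrightarrow> x v i = 0) \<and>
     (\<forall>u<n. \<forall>v<n. vnorm nk d (\<lambda>i. x u i - x v i) \<le> y)"

definition mean_vec :: "nat \<Rightarrow> (nat \<Rightarrow> nat \<Rightarrow> real) \<Rightarrow> nat \<Rightarrow> real" where
  "mean_vec n x = (\<lambda>i. (\<Sum>v<n. x v i) / real n)"

text \<open>An algorithm is given by:
  msg v x y r : the bit string received by machine v (a function of all inputs and the
     shared randomness r), and
  out v xv y r m : the output of machine v, a function of its own input xv, y, the shared
     randomness r and the received bits m.
  The estimate EST is the (common) output; we read it off machine 0.\<close>
definition est_of ::
  "(nat \<Rightarrow> (nat \<Rightarrow> nat \<Rightarrow> real) \<Rightarrow> real \<Rightarrow> (nat \<Rightarrow> bool) \<Rightarrow> bool list) \<Rightarrow>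
   (nat \<Rightarrow> (nat \<Rightarrow> real) \<Rightarrow> real \<Rightarrow> (nat \<Rightarrow> bool) \<Rightarrow> bool list \<Rightarrow> (nat \<Rightarrow> real)) \<Rightarrow>
   (nat \<Rightarrow> nat \<Rightarrow> real) \<Rightarrow> real \<Rightarrow> (nat \<Rightarrow> bool) \<Rightarrow> nat \<Rightarrow> real" where
  "est_of msg out x y r = out 0 (x 0) y r (msg 0 x y r)"

definition mean_est_alg ::
  "normkind \<Rightarrow> nat \<Rightarrow> nat \<Rightarrow> nat \<Rightarrow> (nat \<Rightarrow> bool) measure \<Rightarrow>
   (nat \<Rightarrow> (nat \<Rightarrow> nat \<Rightarrow> real) \<Rightarrow> real \<Rightarrow> (nat \<Rightarrow> bool) \<Rightarrow> bool list) \<Rightarrow>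
   (nat \<Rightarrow> (nat \<Rightarrow> real) \<Rightarrow> real \<Rightarrow> (nat \<Rightarrow> bool) \<Rightarrow> bool list \<Rightarrow> (nat \<Rightarrow> real)) \<Rightarrow> bool" where
  "mean_est_alg nk n d b P msg out \<longleftrightarrow>
     (\<forall>x y. valid_input nk n d x y \<longrightarrow>
        (\<forall>r\<in>space P. \<forall>v<n. length (msg v x y r) \<le> b) \<and>
        (\<forall>r\<in>space P. \<forall>v<n. out v (x v) y r (msg v x y r) = est_of msg out x y r) \<and>
        (\<forall>i<d. integrable P (\<lambda>r. est_of msg out x y r i) \<and>
               (\<integral>r. est_of msg out x y r i \<partial>P) = mean_vec n x i))"

end

(*
  Give machine 0 the input 0 and every other machine the grid point h k with
  k in {0..M-1}^d, so that the mean is ((n-1)/n) h k.  Machine 0 never sees a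
  different input, hence for fixed shared randomness its output is one of fewer
  than 2^(b+1) vectors, one per possible message.  With 1 the all-ones vector,
  any ball of radius h ||1|| / 2 contains at most 8^d of the means, so once
  M^d >= 2 * 2^(b+1) * 8^d at least half of the grid inputs have error
  >= h ||1|| / 2 for every value of the randomness.  Averaging over the grid
  gives one input whose expected squared error is at least (y / (2M))^2 / 2,
  and M = 2^(b div d + 6) turns this into y^2 2^(-2b/d) / 32768.
*)
theory Submission
  imports Defs
begin

lemma sum_half_power_inj_le_two:
  assumes "finite A" "inj_on \<phi> A"
  shows "(\<Sum>j\<in>A. (1/2::real) ^ \<phi> j) \<le> 2"
proof -
  have "(\<Sum>j\<in>A. (1/2::real) ^ \<phi> j) = (\<Sum>l\<in>\<phi> ` A. (1/2) ^ l)"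
    by (simp add: sum.reindex[OF assms(2)])
  also have "\<dots> \<le> (\<Sum>l. (1/2::real) ^ l)"
    by (rule sum_le_suminf) (auto simp: assms)
  also have "\<dots> = 2"
    using suminf_geometric[of "1/2::real"] by simp
  finally show ?thesis .
qed

lemma two_powr_neg_le_half_power:
  assumes "real l \<le> t"
  shows "2 powr (- t) \<le> (1/2::real) ^ l"
proof -
  have "2 powr (- t) \<le> 2 powr (- real l)"
    using assms by simp
  also have "\<dots> = (1/2) ^ l"
    by (simp add: powr_minus powr_realpow power_one_over inverse_eq_divide)
  finally show ?thesis .
qed

lemma sum_two_powr_neg_dist_above_le_two:
  fixes A :: "nat set"
  assumes "finite A" "\<And>j. j \<in> A \<Longrightarrow> u \<le> real j"
  shows "(\<Sum>j\<in>A. 2 powr (- \<bar>u - real j\<bar>)) \<le> 2"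
proof -
  have "(\<Sum>j\<in>A. 2 powr (- \<bar>u - real j\<bar>)) \<le> (\<Sum>j\<in>A. (1/2) ^ (j - nat \<lceil>u\<rceil>))"
    by (intro sum_mono two_powr_neg_le_half_power)
      (use assms(2) in \<open>auto simp: of_nat_diff real_nat_ceiling_ge\<close>)
  also have "\<dots> \<le> 2"
    by (intro sum_half_power_inj_le_two inj_on_diff_nat) (use assms in auto)
  finally show ?thesis .
qed

lemma sum_two_powr_neg_dist_below_le_two:
  fixes A :: "nat set"
  assumes "finite A" "\<And>j. j \<in> A \<Longrightarrow> real j < u"
  shows "(\<Sum>j\<in>A. 2 powr (- \<bar>u - real j\<bar>)) \<le> 2"
proof -
  have floor_bound: "j \<le> nat \<lfloor>u\<rfloor>" "real (nat \<lfloor>u\<rfloor>) \<le> u" if "j \<in> A" for j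
    using assms(2)[OF that] by linarith+
  have "(\<Sum>j\<in>A. 2 powr (- \<bar>u - real j\<bar>)) \<le> (\<Sum>j\<in>A. (1/2) ^ (nat \<lfloor>u\<rfloor> - j))"
  proof (intro sum_mono two_powr_neg_le_half_power)
    fix j assume "j \<in> A"
    then show "real (nat \<lfloor>u\<rfloor> - j) \<le> \<bar>u - real j\<bar>"
      using floor_bound[of j] by (simp add: of_nat_diff)
  qed
  also have "\<dots> \<le> 2"
  proof (intro sum_half_power_inj_le_two inj_onI)
    fix i j assume "i \<in> A" "j \<in> A" "nat \<lfloor>u\<rfloor> - i = nat \<lfloor>u\<rfloor> - j"
    then show "i = j" using floor_bound(1)[of i] floor_bound(1)[of j] by linarith
  qed (rule assms(1))
  finally show ?thesis .
qed

lemma sum_two_powr_neg_dist_le_four: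
  fixes A :: "nat set"
  assumes "finite A"
  shows "(\<Sum>j\<in>A. 2 powr (- \<bar>u - real j\<bar>)) \<le> 4"
proof -
  have "(\<Sum>j\<in>A. 2 powr (- \<bar>u - real j\<bar>))
      = (\<Sum>j\<in>{j\<in>A. u \<le> real j}. 2 powr (- \<bar>u - real j\<bar>))
        + (\<Sum>j\<in>{j\<in>A. real j < u}. 2 powr (- \<bar>u - real j\<bar>))"
    using assms by (subst sum.union_disjoint[symmetric]) (auto intro: sum.cong)
  also have "\<dots> \<le> 2 + 2"
    by (intro add_mono sum_two_powr_neg_dist_above_le_two sum_two_powr_neg_dist_below_le_two)
      (use assms in auto)
  finally show ?thesis by simp
qed

lemma card_lattice_near_l1_le:
  fixes t :: "nat \<Rightarrow> real" and J :: "nat set"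
  assumes "0 < g" "finite J"
  shows "card {k \<in> PiE {..<d} (\<lambda>_. J). (\<Sum>i<d. \<bar>t i - g * real (k i)\<bar>) < g * real d} \<le> 8 ^ d"
proof -
  define K where "K = PiE {..<d} (\<lambda>_. J)"
  have finite_K: "finite K"
    unfolding K_def using assms(2) by (simp add: finite_PiE)
  \<comment> \<open>Near points have product weight at least 1, and the total weight factorises into
    one-dimensional sums, each at most 8.\<close>
  define w where "w i j = 2 powr (1 - \<bar>t i / g - real j\<bar>)" for i j
  have dist_scaled: "\<bar>t i / g - real j\<bar> = \<bar>t i - g * real j\<bar> / g" for i j
    using assms(1) by (simp add: field_simps abs_divide)
  have weight_ge_one: "1 \<le> (\<Prod>i<d. w i (k i))"
    if "(\<Sum>i<d. \<bar>t i - g * real (k i)\<bar>) < g * real d" for k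
  proof -
    have "(\<Sum>i<d. \<bar>t i / g - real (k i)\<bar>) < real d"
      using that assms(1) by (simp add: dist_scaled sum_divide_distrib[symmetric] divide_less_eq mult.commute)
    then have "1 \<le> 2 powr (\<Sum>i<d. 1 - \<bar>t i / g - real (k i)\<bar>)"
      by (simp add: sum_subtractf ge_one_powr_ge_zero)
    then show ?thesis
      by (simp add: w_def powr_sum)
  qed
  define near where "near = {k \<in> K. (\<Sum>i<d. \<bar>t i - g * real (k i)\<bar>) < g * real d}"
  have "real (card near) = (\<Sum>k\<in>near. 1)"
    by simp
  also have "\<dots> \<le> (\<Sum>k\<in>near. \<Prod>i<d. w i (k i))"
    by (rule sum_mono) (simp add: near_def weight_ge_one)
  also have "\<dots> \<le> (\<Sum>k\<in>K. \<Prod>i<d. w i (k i))"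
    by (rule sum_mono2[OF finite_K]) (auto simp: near_def w_def intro!: prod_nonneg)
  also have "\<dots> = (\<Prod>i<d. \<Sum>j\<in>J. w i j)"
    unfolding K_def by (rule prod_sum_PiE[symmetric]) (simp_all add: assms(2))
  also have "\<dots> \<le> (\<Prod>i<d. 8)"
  proof (rule prod_mono)
    fix i
    have "(\<Sum>j\<in>J. w i j) = 2 * (\<Sum>j\<in>J. 2 powr (- \<bar>t i / g - real j\<bar>))"
      by (simp add: w_def powr_diff powr_minus_divide sum_distrib_left)
    also have "\<dots> \<le> 8"
      using sum_two_powr_neg_dist_le_four[OF assms(2), of "t i / g"] by simp
    finally show "0 \<le> (\<Sum>j\<in>J. w i j) \<and> (\<Sum>j\<in>J. w i j) \<le> 8"
      by (simp add: w_def sum_nonneg)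
  qed
  finally have "real (card near) \<le> real (8 ^ d)"
    by simp
  then show ?thesis
    unfolding near_def K_def of_nat_le_iff .
qed

lemma vnorm_nonneg: "0 \<le> vnorm nk d v"
  by (cases nk) (auto intro: sum_nonneg)

lemma vnorm_zero [simp]: "vnorm nk d (\<lambda>_. 0) = 0"
  by (cases nk) (auto simp: image_constant_conv)

lemma vnorm_cong: "(\<And>i. i < d \<Longrightarrow> v i = w i) \<Longrightarrow> vnorm nk d v = vnorm nk d w"
  by (cases nk) (auto intro!: sum.cong image_cong)

lemma vnorm_ones_pos: "1 \<le> d \<Longrightarrow> 0 < vnorm nk d (\<lambda>_. 1)"
  by (cases nk) (auto simp: image_constant_conv lessThan_empty_iff)

lemma vnorm_le_box:
  assumes "\<And>i. i < d \<Longrightarrow> \<bar>v i\<bar> \<le> B"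
  shows "vnorm nk d v \<le> B * vnorm nk d (\<lambda>_. 1)"
proof (cases "d = 0")
  case True
  then show ?thesis by (cases nk) auto
next
  case False
  then have "0 \<le> B" using assms[of 0] by simp
  show ?thesis
  proof (cases nk)
    case L1
    have "(\<Sum>i<d. \<bar>v i\<bar>) \<le> of_nat (card {..<d}) * B"
      by (rule sum_bounded_above) (simp add: assms)
    then show ?thesis using L1 by (simp add: mult.commute)
  next
    case L2
    have "(\<Sum>i<d. (v i)\<^sup>2) \<le> (\<Sum>i<d. B\<^sup>2)"
      by (intro sum_mono) (metis abs_le_square_iff abs_of_nonneg \<open>0 \<le> B\<close> assms lessThan_iff)
    then have "sqrt (\<Sum>i<d. (v i)\<^sup>2) \<le> sqrt (real d * B\<^sup>2)"
      by simp
    then show ?thesis using L2 \<open>0 \<le> B\<close> by (simp add: real_sqrt_mult mult.commute)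
  next
    case Linf
    then show ?thesis using False \<open>0 \<le> B\<close> assms by (auto simp: image_constant_conv)
  qed
qed

lemma sum_abs_mult_vnorm_ones_le: "(\<Sum>i<d. \<bar>v i\<bar>) * vnorm nk d (\<lambda>_. 1) \<le> real d * vnorm nk d v"
proof (cases nk)
  case L1
  then show ?thesis by simp
next
  case L2
  have "(\<Sum>i<d. \<bar>v i\<bar>)\<^sup>2 \<le> real d * (\<Sum>i<d. (v i)\<^sup>2)"
    using sum_squared_le_sum_of_squares[of "\<lambda>i. \<bar>v i\<bar>" "{..<d}"] by (simp add: mult.commute)
  then have "(\<Sum>i<d. \<bar>v i\<bar>) \<le> sqrt (real d * (\<Sum>i<d. (v i)\<^sup>2))"
    by (rule real_le_rsqrt)
  then have "(\<Sum>i<d. \<bar>v i\<bar>) \<le> sqrt (real d) * sqrt (\<Sum>i<d. (v i)\<^sup>2)"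
    by (simp add: real_sqrt_mult)
  then have "(\<Sum>i<d. \<bar>v i\<bar>) * sqrt (real d) \<le> sqrt (real d) * sqrt (\<Sum>i<d. (v i)\<^sup>2) * sqrt (real d)"
    by (simp add: mult_right_mono)
  also have "\<dots> = (sqrt (real d) * sqrt (real d)) * sqrt (\<Sum>i<d. (v i)\<^sup>2)"
    by (simp only: mult_ac)
  also have "\<dots> = real d * sqrt (\<Sum>i<d. (v i)\<^sup>2)"
    by simp
  finally show ?thesis using L2 by simp
next
  case Linf
  show ?thesis
  proof (cases "d = 0")
    case False
    have "(\<Sum>i<d. \<bar>v i\<bar>) \<le> of_nat (card {..<d}) * Max (insert 0 ((\<lambda>i. \<bar>v i\<bar>) ` {..<d}))"
      by (rule sum_bounded_above) auto
    moreover have "vnorm nk d (\<lambda>_. 1) = 1"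
      using Linf False by (simp add: image_constant_conv lessThan_empty_iff)
    ultimately show ?thesis using Linf by simp
  qed (simp add: Linf)
qed

lemma borel_measurable_vnorm[measurable]:
  assumes "\<And>i. i < d \<Longrightarrow> (\<lambda>r. F r i) \<in> borel_measurable M"
  shows "(\<lambda>r. vnorm nk d (F r)) \<in> borel_measurable M"
proof (cases nk)
  case Linf
  show ?thesis
  proof (cases "d = 0")
    case False
    have "(\<lambda>r. max 0 (Max ((\<lambda>i. \<bar>F r i\<bar>) ` {..<d}))) \<in> borel_measurable M"
      using assms by measurable
    moreover have "Max (insert 0 ((\<lambda>i. \<bar>F r i\<bar>) ` {..<d})) = max 0 (Max ((\<lambda>i. \<bar>F r i\<bar>) ` {..<d}))" for r
      using False by (subst Max_insert) (auto simp: lessThan_empty_iff)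
    ultimately show ?thesis using Linf by simp
  qed (simp add: Linf)
qed (use assms in simp_all)

lemma card_lattice_near_vnorm_le:
  fixes t :: "nat \<Rightarrow> real" and J :: "nat set"
  assumes "0 < g" "finite J"
  shows "card {k \<in> PiE {..<d} (\<lambda>_. J). vnorm nk d (\<lambda>i. t i - g * real (k i)) < g * vnorm nk d (\<lambda>_. 1)}
    \<le> 8 ^ d"
proof -
  have "{k \<in> PiE {..<d} (\<lambda>_. J). vnorm nk d (\<lambda>i. t i - g * real (k i)) < g * vnorm nk d (\<lambda>_. 1)}
      \<subseteq> {k \<in> PiE {..<d} (\<lambda>_. J). (\<Sum>i<d. \<bar>t i - g * real (k i)\<bar>) < g * real d}"
  proof safe
    fix k assume "k \<in> PiE {..<d} (\<lambda>_. J)"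
      and near: "vnorm nk d (\<lambda>i. t i - g * real (k i)) < g * vnorm nk d (\<lambda>_. 1)"
    define S where "S = (\<Sum>i<d. \<bar>t i - g * real (k i)\<bar>)"
    define N where "N = vnorm nk d (\<lambda>i. t i - g * real (k i))"
    define D where "D = vnorm nk d (\<lambda>_. 1)"
    have "0 < g * D"
      using near vnorm_nonneg[of nk d] unfolding D_def by (meson le_less_trans)
    then have "0 < D"
      using assms(1) by (simp add: zero_less_mult_iff)
    have "d \<noteq> 0"
    proof
      assume "d = 0"
      then show False using near by (cases nk) auto
    qed
    then have "real d * N < real d * (g * D)"
      using near by (simp add: N_def D_def)
    moreover have "S * D \<le> real d * N"
      unfolding S_def N_def D_def by (rule sum_abs_mult_vnorm_ones_le)
    ultimately have "S * D < (g * real d) * D"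
      by (simp add: mult_ac)
    then show "(\<Sum>i<d. \<bar>t i - g * real (k i)\<bar>) < g * real d"
      using \<open>0 < D\<close> by (simp add: S_def)
  qed
  then have "card {k \<in> PiE {..<d} (\<lambda>_. J). vnorm nk d (\<lambda>i. t i - g * real (k i)) < g * vnorm nk d (\<lambda>_. 1)}
      \<le> card {k \<in> PiE {..<d} (\<lambda>_. J). (\<Sum>i<d. \<bar>t i - g * real (k i)\<bar>) < g * real d}"
    by (rule card_mono[rotated]) (simp add: assms(2) finite_PiE)
  also have "\<dots> \<le> 8 ^ d"
    by (rule card_lattice_near_l1_le[OF assms])
  finally show ?thesis .
qed

lemma finite_bool_lists_length_le: "finite {m :: bool list. length m \<le> b}"
  using finite_lists_length_le[of "UNIV :: bool set" b] by simp

lemma card_bool_lists_length_le: "card {m :: bool list. length m \<le> b} < 2 ^ Suc b"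
proof -
  have "card {m :: bool list. length m \<le> b} = (\<Sum>i\<le>b. 2 ^ i)"
    using card_lists_length_le[of "UNIV :: bool set" b] by simp
  also have "\<dots> = 2 ^ Suc b - 1"
    using sum_power2[of "Suc b"] by (simp add: atLeast0LessThan lessThan_Suc_atMost)
  finally show ?thesis by simp
qed

lemma sum_sq_ge_if_few_estimates:
  fixes \<delta> :: "'e \<Rightarrow> 'k \<Rightarrow> real"
  assumes "finite K" "finite E" "est ` K \<subseteq> E"
    and few_near: "\<And>s. s \<in> E \<Longrightarrow> card {k \<in> K. \<delta> s k < \<epsilon>} \<le> B"
    and "2 * card E * B \<le> card K" "0 \<le> \<epsilon>"
  shows "real (card K) * \<epsilon>\<^sup>2 / 2 \<le> (\<Sum>k\<in>K. (\<delta> (est k) k)\<^sup>2)"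
proof -
  define bad where "bad = {k \<in> K. \<delta> (est k) k < \<epsilon>}"
  have "bad \<subseteq> (\<Union>s\<in>E. {k \<in> K. \<delta> s k < \<epsilon>})"
    using assms(3) by (auto simp: bad_def)
  then have "card bad \<le> card (\<Union>s\<in>E. {k \<in> K. \<delta> s k < \<epsilon>})"
    by (rule card_mono[rotated]) (simp add: assms(1,2))
  also have "\<dots> \<le> (\<Sum>s\<in>E. card {k \<in> K. \<delta> s k < \<epsilon>})"
    by (rule card_UN_le[OF assms(2)])
  also have "\<dots> \<le> card E * B"
    using sum_mono[of E _ "\<lambda>_. B", OF few_near] by simp
  finally have "2 * card bad \<le> card K"
    using assms(5) by linarith
  have "bad \<subseteq> K" "finite bad"
    using assms(1) by (auto simp: bad_def)
  have "card K \<le> 2 * card (K - bad)"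
    using \<open>2 * card bad \<le> card K\<close> card_Diff_subset[OF \<open>finite bad\<close> \<open>bad \<subseteq> K\<close>] by arith
  then have "real (card K) * \<epsilon>\<^sup>2 \<le> (2 * real (card (K - bad))) * \<epsilon>\<^sup>2"
    by (intro mult_right_mono) simp_all
  then have "real (card K) * \<epsilon>\<^sup>2 / 2 \<le> real (card (K - bad)) * \<epsilon>\<^sup>2"
    by simp
  also have "\<dots> = (\<Sum>k\<in>K - bad. \<epsilon>\<^sup>2)"
    by simp
  also have "\<dots> \<le> (\<Sum>k\<in>K - bad. (\<delta> (est k) k)\<^sup>2)"
    by (rule sum_mono) (use \<open>0 \<le> \<epsilon>\<close> in \<open>auto simp: bad_def intro!: power_mono\<close>)
  also have "\<dots> \<le> (\<Sum>k\<in>K. (\<delta> (est k) k)\<^sup>2)"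
    by (rule sum_mono2) (simp_all add: assms(1))
  finally show ?thesis .
qed

lemma (in prob_space) ex_nn_integral_ge_average:
  fixes f :: "'k \<Rightarrow> 'a \<Rightarrow> real"
  assumes "finite K" "K \<noteq> {}" "\<And>k. k \<in> K \<Longrightarrow> f k \<in> borel_measurable M"
    and "\<And>r. r \<in> space M \<Longrightarrow> real (card K) * c \<le> (\<Sum>k\<in>K. f k r)"
    and "\<And>k r. 0 \<le> f k r" "0 \<le> c"
  shows "\<exists>k\<in>K. ennreal c \<le> (\<integral>\<^sup>+ r. ennreal (f k r) \<partial>M)"
proof -
  define I where "I k = (\<integral>\<^sup>+ r. ennreal (f k r) \<partial>M)" for k
  have "Max (I ` K) \<in> I ` K"
    using assms(1,2) by (intro Max_in) simp_all
  then obtain k0 where "k0 \<in> K" "I k0 = Max (I ` K)"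
    by (metis imageE)
  then have k0_max: "I k \<le> I k0" if "k \<in> K" for k
    using assms(1) that by simp
  have "of_nat (card K) * ennreal c = (\<integral>\<^sup>+ r. ennreal (real (card K) * c) \<partial>M)"
    using assms(6) by (simp add: emeasure_space_1 ennreal_mult ennreal_of_nat_eq_real_of_nat)
  also have "\<dots> \<le> (\<integral>\<^sup>+ r. (\<Sum>k\<in>K. ennreal (f k r)) \<partial>M)"
    using assms(4,5) by (intro nn_integral_mono) (simp add: sum_ennreal ennreal_leI)
  also have "\<dots> = (\<Sum>k\<in>K. I k)"
    unfolding I_def by (rule nn_integral_sum) (simp add: assms(3) measurable_compose[OF _ measurable_ennreal])
  also have "\<dots> \<le> of_nat (card K) * I k0"
    using sum_bounded_above[of K I "I k0"] k0_max by simp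
  finally have "of_nat (card K) * ennreal c \<le> of_nat (card K) * I k0" .
  then have "ennreal c \<le> I k0"
    using assms(1,2) by (simp add: ennreal_mult_le_mult_iff)
  then show ?thesis
    using \<open>k0 \<in> K\<close> by (auto simp: I_def)
qed

definition est_sq_error ::
  "normkind \<Rightarrow> nat \<Rightarrow> nat \<Rightarrow>
   (nat \<Rightarrow> (nat \<Rightarrow> nat \<Rightarrow> real) \<Rightarrow> real \<Rightarrow> (nat \<Rightarrow> bool) \<Rightarrow> bool list) \<Rightarrow>
   (nat \<Rightarrow> (nat \<Rightarrow> real) \<Rightarrow> real \<Rightarrow> (nat \<Rightarrow> bool) \<Rightarrow> bool list \<Rightarrow> (nat \<Rightarrow> real)) \<Rightarrow>
   (nat \<Rightarrow> nat \<Rightarrow> real) \<Rightarrow> real \<Rightarrow> (nat \<Rightarrow> bool) \<Rightarrow> real" where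
  "est_sq_error nk n d msg out x y r = (vnorm nk d (\<lambda>i. est_of msg out x y r i - mean_vec n x i))\<^sup>2"

lemma est_of_mem_outputs:
  assumes "mean_est_alg nk n d b P msg out" "valid_input nk n d x y" "r \<in> space P" "0 < n"
  shows "est_of msg out x y r \<in> out 0 (x 0) y r ` {m. length m \<le> b}"
  using assms unfolding mean_est_alg_def est_of_def by blast

lemma borel_measurable_est_sq_error:
  assumes "mean_est_alg nk n d b P msg out" "valid_input nk n d x y"
  shows "est_sq_error nk n d msg out x y \<in> borel_measurable P"
proof -
  have "(\<lambda>r. est_of msg out x y r i) \<in> borel_measurable P" if "i < d" for i
    using assms that unfolding mean_est_alg_def by (blast intro: borel_measurable_integrable)
  then show ?thesis
    unfolding est_sq_error_def by measurable
qed

definition grid_input :: "nat \<Rightarrow> real \<Rightarrow> (nat \<Rightarrow> nat) \<Rightarrow> nat \<Rightarrow> nat \<Rightarrow> real" where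
  "grid_input d h k v i = (if v = 0 \<or> d \<le> i then 0 else h * real (k i))"

lemma valid_input_grid_input:
  assumes "k \<in> PiE {..<d} (\<lambda>_. {..<M})" "0 \<le> h" "h * real M * vnorm nk d (\<lambda>_. 1) \<le> y"
  shows "valid_input nk n d (grid_input d h k) y"
  unfolding valid_input_def
proof (intro conjI allI impI)
  fix u v assume "u < n" "v < n"
  have range: "0 \<le> grid_input d h k w i" "grid_input d h k w i \<le> h * real M" if "i < d" for w i
    using assms(1,2) that by (auto simp: grid_input_def PiE_iff less_imp_le intro!: mult_left_mono)
  have "vnorm nk d (\<lambda>i. grid_input d h k u i - grid_input d h k v i) \<le> h * real M * vnorm nk d (\<lambda>_. 1)"
  proof (rule vnorm_le_box)
    fix i assume "i < d"
    then show "\<bar>grid_input d h k u i - grid_input d h k v i\<bar> \<le> h * real M"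
      using range[of i u] range[of i v] by linarith
  qed
  then show "vnorm nk d (\<lambda>i. grid_input d h k u i - grid_input d h k v i) \<le> y"
    using assms(3) by linarith
qed (simp add: grid_input_def)

lemma mean_vec_grid_input:
  assumes "1 \<le> n" "i < d"
  shows "mean_vec n (grid_input d h k) i = (real (n - 1) / real n * h) * real (k i)"
proof -
  obtain m where "n = Suc m"
    using assms(1) by (cases n) auto
  then show ?thesis
    using assms(2) by (simp add: mean_vec_def grid_input_def sum.lessThan_Suc_shift del: sum.lessThan_Suc)
qed

lemma card_grid_near_mean_le:
  fixes s :: "nat \<Rightarrow> real" and J :: "nat set"
  assumes "2 \<le> n" "0 < h" "finite J"
  shows "card {k \<in> PiE {..<d} (\<lambda>_. J).
      vnorm nk d (\<lambda>i. s i - mean_vec n (grid_input d h k) i) < h * vnorm nk d (\<lambda>_. 1) / 2} \<le> 8 ^ d"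
proof -
  define g where "g = real (n - 1) / real n * h"
  have "0 < g" "h / 2 \<le> g"
    using assms(1,2) by (simp_all add: g_def field_simps of_nat_diff)
  have "vnorm nk d (\<lambda>i. s i - mean_vec n (grid_input d h k) i) = vnorm nk d (\<lambda>i. s i - g * real (k i))" for k
    unfolding g_def using assms(1) by (intro vnorm_cong) (simp add: mean_vec_grid_input)
  moreover have "h * vnorm nk d (\<lambda>_. 1) / 2 \<le> g * vnorm nk d (\<lambda>_. 1)"
    using mult_right_mono[OF \<open>h / 2 \<le> g\<close> vnorm_nonneg[of nk d "\<lambda>_. 1"]] by simp
  ultimately have "{k \<in> PiE {..<d} (\<lambda>_. J).
      vnorm nk d (\<lambda>i. s i - mean_vec n (grid_input d h k) i) < h * vnorm nk d (\<lambda>_. 1) / 2}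
    \<subseteq> {k \<in> PiE {..<d} (\<lambda>_. J). vnorm nk d (\<lambda>i. s i - g * real (k i)) < g * vnorm nk d (\<lambda>_. 1)}"
    by auto
  then have "card {k \<in> PiE {..<d} (\<lambda>_. J).
      vnorm nk d (\<lambda>i. s i - mean_vec n (grid_input d h k) i) < h * vnorm nk d (\<lambda>_. 1) / 2}
    \<le> card {k \<in> PiE {..<d} (\<lambda>_. J). vnorm nk d (\<lambda>i. s i - g * real (k i)) < g * vnorm nk d (\<lambda>_. 1)}"
    by (rule card_mono[rotated]) (simp add: assms(3) finite_PiE)
  also have "\<dots> \<le> 8 ^ d"
    by (rule card_lattice_near_vnorm_le[OF \<open>0 < g\<close> assms(3)])
  finally show ?thesis .
qed

lemma sum_est_sq_error_grid_ge:
  assumes "2 \<le> n" "0 < h" and alg: "mean_est_alg nk n d b P msg out" and "r \<in> space P"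
    and fits: "h * real M * vnorm nk d (\<lambda>_. 1) \<le> y"
    and large: "2 * 2 ^ Suc b * 8 ^ d \<le> M ^ d"
  shows "real (M ^ d) * (h * vnorm nk d (\<lambda>_. 1) / 2)\<^sup>2 / 2
    \<le> (\<Sum>k\<in>PiE {..<d} (\<lambda>_. {..<M}). est_sq_error nk n d msg out (grid_input d h k) y r)"
proof -
  define K where "K = PiE {..<d} (\<lambda>_. {..<M})"
  define outputs where "outputs = out 0 (\<lambda>_. 0) y r ` {m. length m \<le> b}"
  have "real (card K) * (h * vnorm nk d (\<lambda>_. 1) / 2)\<^sup>2 / 2
      \<le> (\<Sum>k\<in>K. (vnorm nk d (\<lambda>i. est_of msg out (grid_input d h k) y r i - mean_vec n (grid_input d h k) i))\<^sup>2)"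
  proof (rule sum_sq_ge_if_few_estimates[where E = outputs and B = "8 ^ d"
        and est = "\<lambda>k. est_of msg out (grid_input d h k) y r"
        and \<delta> = "\<lambda>s k. vnorm nk d (\<lambda>i. s i - mean_vec n (grid_input d h k) i)"])
    show "(\<lambda>k. est_of msg out (grid_input d h k) y r) ` K \<subseteq> outputs"
    proof (rule image_subsetI)
      fix k assume "k \<in> K"
      then have valid: "valid_input nk n d (grid_input d h k) y"
        using \<open>0 < h\<close> fits by (intro valid_input_grid_input[where M = M]) (simp_all add: K_def)
      have "grid_input d h k 0 = (\<lambda>_. 0)"
        by (simp add: grid_input_def fun_eq_iff)
      then show "est_of msg out (grid_input d h k) y r \<in> outputs"
        using est_of_mem_outputs[OF alg valid \<open>r \<in> space P\<close>] assms(1) by (simp add: outputs_def)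
    qed
    have "card outputs < 2 ^ Suc b"
      using card_image_le[OF finite_bool_lists_length_le, of "out 0 (\<lambda>_. 0) y r" b]
        card_bool_lists_length_le[of b]
      unfolding outputs_def by linarith
    then have "2 * card outputs * 8 ^ d \<le> 2 * 2 ^ Suc b * 8 ^ d"
      by simp
    also have "\<dots> \<le> card K"
      using large by (simp only: K_def card_PiE finite_lessThan prod_constant card_lessThan)
    finally show "2 * card outputs * 8 ^ d \<le> card K" .
    fix s
    show "card {k \<in> K. vnorm nk d (\<lambda>i. s i - mean_vec n (grid_input d h k) i) < h * vnorm nk d (\<lambda>_. 1) / 2}
        \<le> 8 ^ d"
      unfolding K_def using assms(1,2) by (rule card_grid_near_mean_le) simp
  qed (use assms(2) in \<open>simp_all add: K_def outputs_def finite_bool_lists_length_le finite_PiE vnorm_nonneg\<close>)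
  then show ?thesis
    by (simp add: K_def card_PiE est_sq_error_def)
qed

lemma grid_size_ge:
  assumes "1 \<le> d"
  shows "2 * 2 ^ Suc b * 8 ^ d \<le> (2 ^ (b div d + 6) :: nat) ^ d"
proof -
  have "b mod d < d"
    using assms by simp
  then have "b < b div d * d + d"
    using div_mult_mod_eq[of b d] by linarith
  then have "b < (b div d + 1) * d"
    by (simp add: add_mult_distrib)
  then have "b + 2 + 3 * d \<le> (b div d + 6) * d"
    using assms by (simp add: algebra_simps)
  have "2 * 2 ^ Suc b * 8 ^ d = (2::nat) ^ (b + 2 + 3 * d)"
    by (simp add: power_add power_mult)
  also have "\<dots> \<le> 2 ^ ((b div d + 6) * d)"
    by (rule power_increasing) (use \<open>b + 2 + 3 * d \<le> (b div d + 6) * d\<close> in simp_all)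
  also have "\<dots> = (2 ^ (b div d + 6)) ^ d"
    by (rule power_mult)
  finally show ?thesis .
qed

lemma mean_est_alg_error_ge:
  assumes "2 \<le> n" "1 \<le> d" "0 < y" "prob_space P" and alg: "mean_est_alg nk n d b P msg out"
  shows "\<exists>x. valid_input nk n d x y \<and>
    ennreal ((y / (2 * 2 ^ (b div d + 6)))\<^sup>2 / 2) \<le> (\<integral>\<^sup>+ r. ennreal (est_sq_error nk n d msg out x y r) \<partial>P)"
proof -
  define M :: nat where "M = 2 ^ (b div d + 6)"
  define D where "D = vnorm nk d (\<lambda>_. 1)"
  define h where "h = y / (real M * D)"
  define K where "K = PiE {..<d} (\<lambda>_. {..<M})"
  have "0 < D" "0 < M"
    using vnorm_ones_pos[OF assms(2)] by (simp_all add: D_def M_def)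
  then have "0 < h" "h * real M * D = y" "h * D / 2 = y / (2 * real M)"
    using assms(3) by (simp_all add: h_def)
  have "finite K" "K \<noteq> {}" "card K = M ^ d"
    using \<open>0 < M\<close> by (simp_all add: K_def finite_PiE card_PiE PiE_eq_empty_iff lessThan_empty_iff)
  have valid: "valid_input nk n d (grid_input d h k) y" if "k \<in> K" for k
    using that \<open>0 < h\<close> \<open>h * real M * D = y\<close>
    by (intro valid_input_grid_input[where M = M]) (simp_all add: K_def D_def)
  have "\<exists>k\<in>K. ennreal ((y / (2 * real M))\<^sup>2 / 2)
      \<le> (\<integral>\<^sup>+ r. ennreal (est_sq_error nk n d msg out (grid_input d h k) y r) \<partial>P)"
  proof (rule prob_space.ex_nn_integral_ge_average[OF assms(4) \<open>finite K\<close> \<open>K \<noteq> {}\<close>])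
    fix r assume "r \<in> space P"
    have "h * real M * vnorm nk d (\<lambda>_. 1) \<le> y"
      using \<open>h * real M * D = y\<close> by (simp add: D_def)
    moreover have "2 * 2 ^ Suc b * 8 ^ d \<le> M ^ d"
      unfolding M_def by (rule grid_size_ge[OF assms(2)])
    ultimately have "real (M ^ d) * (h * D / 2)\<^sup>2 / 2
        \<le> (\<Sum>k\<in>K. est_sq_error nk n d msg out (grid_input d h k) y r)"
      unfolding K_def D_def by (rule sum_est_sq_error_grid_ge[OF assms(1) \<open>0 < h\<close> alg \<open>r \<in> space P\<close>])
    then show "real (card K) * ((y / (2 * real M))\<^sup>2 / 2)
        \<le> (\<Sum>k\<in>K. est_sq_error nk n d msg out (grid_input d h k) y r)"
      unfolding \<open>h * D / 2 = y / (2 * real M)\<close> \<open>card K = M ^ d\<close> by simp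
  next
    fix k assume "k \<in> K"
    show "est_sq_error nk n d msg out (grid_input d h k) y \<in> borel_measurable P"
      using borel_measurable_est_sq_error[OF alg valid[OF \<open>k \<in> K\<close>]] .
  qed (simp_all add: est_sq_error_def)
  then show ?thesis
    using valid by (auto simp: M_def)
qed

lemma four_power_div_le:
  assumes "1 \<le> d"
  shows "(4::real) ^ (b div d) \<le> 2 powr (2 * real b / real d)"
proof -
  have "real (b div d * d) \<le> real b"
    by (simp only: of_nat_le_iff div_times_less_eq_dividend)
  then have "real (b div d) \<le> real b / real d"
    using assms by (simp add: le_divide_eq)
  have "(4::real) ^ (b div d) = 2 ^ (2 * (b div d))"
    by (simp add: power_mult)
  also have "\<dots> = 2 powr real (2 * (b div d))"
    by (rule powr_realpow[symmetric]) simp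
  also have "\<dots> \<le> 2 powr (2 * real b / real d)"
    using \<open>real (b div d) \<le> real b / real d\<close> by (intro powr_mono) simp_all
  finally show ?thesis .
qed

lemma rate_le_grid_resolution:
  assumes "1 \<le> d"
  shows "1 / 32768 * y\<^sup>2 * 2 powr (- (2 * real b / real d)) \<le> (y / (2 * 2 ^ (b div d + 6)))\<^sup>2 / 2"
proof -
  have "(2 * 2 ^ (b div d + 6) :: real)\<^sup>2 = (2 ^ (b div d + 7))\<^sup>2"
    by (simp add: power_add)
  also have "\<dots> = 4 ^ (b div d + 7)"
    by (simp add: power2_eq_square power_mult_distrib[symmetric])
  also have "\<dots> = 16384 * 4 ^ (b div d)"
    by (simp add: power_add)
  finally have grid_sq: "(2 * 2 ^ (b div d + 6) :: real)\<^sup>2 = 16384 * 4 ^ (b div d)" .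
  have "1 / 32768 * y\<^sup>2 * 2 powr (- (2 * real b / real d)) = y\<^sup>2 / (32768 * 2 powr (2 * real b / real d))"
    by (simp add: powr_minus_divide)
  also have "\<dots> \<le> y\<^sup>2 / (32768 * 4 ^ (b div d))"
    by (rule divide_left_mono) (use four_power_div_le[OF assms, of b] in auto)
  also have "\<dots> = (y / (2 * 2 ^ (b div d + 6)))\<^sup>2 / 2"
    unfolding power_divide grid_sq by simp
  finally show ?thesis .
qed

theorem theorem38:
  shows "\<exists>c>0. \<forall>(nk::normkind) (n::nat) (d::nat) (b::nat) (P::(nat \<Rightarrow> bool) measure) msg out (y::real).
    2 \<le> n \<longrightarrow> 1 \<le> d \<longrightarrow> 0 \<le> y \<longrightarrow> prob_space P \<longrightarrow> mean_est_alg nk n d b P msg out \<longrightarrow>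
    (\<exists>x. valid_input nk n d x y \<and>
       (\<integral>\<^sup>+ r. ennreal ((vnorm nk d (\<lambda>i. est_of msg out x y r i - mean_vec n x i))\<^sup>2) \<partial>P)
         \<ge> ennreal (c * y\<^sup>2 * 2 powr (- (2 * real b / real d))))"
proof (intro exI[of _ "1 / 32768"] conjI allI impI)
  fix nk n d b P msg out and y :: real
  assume setting: "2 \<le> n" "1 \<le> d" "0 \<le> y" "prob_space P" "mean_est_alg nk n d b P msg out"
  show "\<exists>x. valid_input nk n d x y \<and>
      (\<integral>\<^sup>+ r. ennreal ((vnorm nk d (\<lambda>i. est_of msg out x y r i - mean_vec n x i))\<^sup>2) \<partial>P)
        \<ge> ennreal (1 / 32768 * y\<^sup>2 * 2 powr (- (2 * real b / real d)))"
  proof (cases "y = 0")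
    case True
    then show ?thesis
      by (intro exI[of _ "\<lambda>_ _. 0"]) (simp add: valid_input_def)
  next
    case False
    with setting(3) have "0 < y"
      by simp
    then obtain x where "valid_input nk n d x y" and "ennreal ((y / (2 * 2 ^ (b div d + 6)))\<^sup>2 / 2)
        \<le> (\<integral>\<^sup>+ r. ennreal (est_sq_error nk n d msg out x y r) \<partial>P)"
      using mean_est_alg_error_ge[OF setting(1,2) _ setting(4,5)] by blast
    moreover have "ennreal (1 / 32768 * y\<^sup>2 * 2 powr (- (2 * real b / real d)))
        \<le> ennreal ((y / (2 * 2 ^ (b div d + 6)))\<^sup>2 / 2)"
      using rate_le_grid_resolution[OF setting(2)] by (rule ennreal_leI)
    ultimately show ?thesis
      unfolding est_sq_error_def by (blast intro: order.trans)
  qed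
qed simp

end
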